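(* Fix an integer $m>1$, $L>0$, $T>0$, put $h=L/m$, and let weights $w_0=0$, $w_1,\dots,w_{m-1}$ be given such that the matrix $M^*$ defined below is invertible. Let $F\in\mathbb{R}^{m-1}$ and $(U^0,V^0)\in\mathbb{R}^{m-1}\times\mathbb{R}^{m-1}$ be given, and let $\mathcal{U}_h=(U_h,V_h)\in \mathrm{C}^1([0,T];\mathbb{R}^{m-1}\times\mathbb{R}^{m-1})$ be the solution of $$\mathcal{U}_h'(t)=G(\mathcal{U}_h(t)),\quad t\in[0,T],\qquad \mathcal{U}_h(0)=(U^0,V^0),$$ where for $\mathcal{U}=(U,V)$ with $U=(u_1,\dots,u_{m-1})^{\mathsf T}$, $$G(\mathcal{U})=\Big(\tfrac1h (M^* )^{-1}V,\; -\tfrac1h S^*U+F+\tfrac1h u_1^+e_1\Big).$$ For $N\in\mathbb{N}$ set $\Delta t=T/N$, $t_n=n\Delta t$, and call a sequence $(\mathcal{U}^n)_{n=0}^N$ a Crank–Nicolson sequence if $\mathcal{U}^0=\mathcal{U}_h(0)$ and $$\frac{\mathcal{U}^{n+1}-\mathcal{U}^n}{\Delta t}=\frac12\big(G(\mathcal{U}^{n+1})+G(\mathcal{U}^n)\big),\qquad n=0,\dots,N-1.$$ Then the time discretization error of the Crank–Nicolson method is of order $\Delta t$: there exist constants $\delta>0$ and $K>0$ (which may depend on $h$, $T$ and the data, but not on $\Delta t$) such that for every $N$ with $\Delta t=T/N<\delta$ and every Crank–Nicolson sequence $(\mathcal{U}^n)$, $$\max_{0\le n\le N}\|\mathcal{U}_h(t_n)-\mathcal{U}^n\|\le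 K\,\Delta t .$$
   Context: $\|\cdot\|$ is the Euclidean norm on $\mathbb{R}^{m-1}\times\mathbb{R}^{m-1}$, $s^+=\max(s,0)$, $e_1=(1,0,\dots,0)^{\mathsf T}\in\mathbb{R}^{m-1}$. Hat functions on $[0,L]$ with nodes $kh$: $\varphi_0(x)=1-x/h$ on $[0,h)$ and $0$ for $x\ge h$; for $k=1,\dots,m-1$, $\varphi_k(x)=x/h-k+1$ on $[(k-1)h,kh)$, $k+1-x/h$ on $[kh,(k+1)h)$, $0$ otherwise. The weight function is $w_h(x)=w_j$ for $x\in[jh,(j+1)h)$, $j=0,\dots,m-1$ (with $w_0=0$). The matrices $M^*,S^*\in\mathbb{R}^{(m-1)\times(m-1)}$ are given for $i,k=1,\dots,m-1$ by $M^*_{ik}=\frac1h\int_0^L\varphi_i\varphi_k w_h\,dx$ and $S^*_{ik}=h\int_0^L\varphi_i'\varphi_k'\,dx$. (This ODE is the reformulation of the spatially semi-discrete mass-redistributed contact problem for the 1D wave equation, after elimination of the contact node via $u_0=u_1^+$.) *)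

theory Defs
  imports "HOL-Analysis.Analysis"
begin

text \<open>Vectors in R^(m-1) are represented as functions nat => real, of which only the
  components with index in {1..m-1} are meaningful; matrices as nat => nat => real
  with indices in {1..m-1}.\<close>

type_synonym rvec = "nat \<Rightarrow> real"
type_synonym rmat = "nat \<Rightarrow> nat \<Rightarrow> real"
type_synonym state = "rvec \<times> rvec"

definition hat :: "real \<Rightarrow> nat \<Rightarrow> real \<Rightarrow> real" where
  "hat h k x =
     (if k = 0 then (if 0 \<le> x \<and> x < h then 1 - x / h else 0)
      else if (real k - 1) * h \<le> x \<and> x < real k * h then x / h - real k + 1
      else if real k * h \<le> x \<and> x < (real k + 1) * h then real k + 1 - x / h
      else 0)"

definition wh :: "real \<Rightarrow> (nat \<Rightarrow> real) \<Rightarrow> real \<Rightarrow> real" where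
  "wh h w x = w (nat \<lfloor>x / h\<rfloor>)"

definition Mstar :: "real \<Rightarrow> real \<Rightarrow> (nat \<Rightarrow> real) \<Rightarrow> rmat" where
  "Mstar L h w i k = (1 / h) * integral {0..L} (\<lambda>x. hat h i x * hat h k x * wh h w x)"

definition Sstar :: "real \<Rightarrow> real \<Rightarrow> rmat" where
  "Sstar L h i k = h * integral {0..L} (\<lambda>x. deriv (hat h i) x * deriv (hat h k) x)"

definition is_inverse_on :: "nat \<Rightarrow> rmat \<Rightarrow> rmat \<Rightarrow> bool" where
  "is_inverse_on n A B \<longleftrightarrow>
     (\<forall>i\<in>{1..n}. \<forall>k\<in>{1..n}.
        (\<Sum>j=1..n. A i j * B j k) = (if i = k then 1 else 0) \<and>
        (\<Sum>j=1..n. B i j * A j k) = (if i = k then 1 else 0))"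

definition invertible_on :: "nat \<Rightarrow> rmat \<Rightarrow> bool" where
  "invertible_on n A \<longleftrightarrow> (\<exists>B. is_inverse_on n A B)"

definition inv_on :: "nat \<Rightarrow> rmat \<Rightarrow> rmat" where
  "inv_on n A = (SOME B. is_inverse_on n A B)"

definition matvec :: "nat \<Rightarrow> rmat \<Rightarrow> rvec \<Rightarrow> rvec" where
  "matvec n A v i = (\<Sum>k=1..n. A i k * v k)"

definition Gfun :: "nat \<Rightarrow> real \<Rightarrow> (nat \<Rightarrow> real) \<Rightarrow> rvec \<Rightarrow> state \<Rightarrow> state" where
  "Gfun m L w F UV =
     (let h = L / real m; U = fst UV; V = snd UV in
      ((\<lambda>i. (1 / h) * matvec (m - 1) (inv_on (m - 1) (Mstar L h w)) V i),
       (\<lambda>i. - (1 / h) * matvec (m - 1) (Sstar L h) U i + F i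
             + (1 / h) * (if i = 1 then max (U 1) 0 else 0))))"

definition snorm :: "nat \<Rightarrow> state \<Rightarrow> real" where
  "snorm m UV = sqrt (\<Sum>i=1..m-1. (fst UV i)\<^sup>2 + (snd UV i)\<^sup>2)"

definition sdiff :: "state \<Rightarrow> state \<Rightarrow> state" where
  "sdiff A B = ((\<lambda>i. fst A i - fst B i), (\<lambda>i. snd A i - snd B i))"

definition is_solution :: "nat \<Rightarrow> real \<Rightarrow> real \<Rightarrow> (nat \<Rightarrow> real) \<Rightarrow> rvec \<Rightarrow> rvec \<Rightarrow> rvec
    \<Rightarrow> (real \<Rightarrow> state) \<Rightarrow> bool" where
  "is_solution m L T w F U0 V0 Uh \<longleftrightarrow>
     (\<forall>i\<in>{1..m-1}. fst (Uh 0) i = U0 i \<and> snd (Uh 0) i = V0 i) \<and>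
     (\<forall>t\<in>{0..T}. \<forall>i\<in>{1..m-1}.
        ((\<lambda>s. fst (Uh s) i) has_real_derivative fst (Gfun m L w F (Uh t)) i) (at t within {0..T}) \<and>
        ((\<lambda>s. snd (Uh s) i) has_real_derivative snd (Gfun m L w F (Uh t)) i) (at t within {0..T}))"

definition is_CN_seq :: "nat \<Rightarrow> real \<Rightarrow> real \<Rightarrow> (nat \<Rightarrow> real) \<Rightarrow> rvec \<Rightarrow> (real \<Rightarrow> state)
    \<Rightarrow> nat \<Rightarrow> (nat \<Rightarrow> state) \<Rightarrow> bool" where
  "is_CN_seq m L T w F Uh N Us \<longleftrightarrow>
     (let dt = T / real N in
      (\<forall>i\<in>{1..m-1}. fst (Us 0) i = fst (Uh 0) i \<and> snd (Us 0) i = snd (Uh 0) i) \<and>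
      (\<forall>n<N. \<forall>i\<in>{1..m-1}.
         (fst (Us (Suc n)) i - fst (Us n) i) / dt
           = (1/2) * (fst (Gfun m L w F (Us (Suc n))) i + fst (Gfun m L w F (Us n)) i) \<and>
         (snd (Us (Suc n)) i - snd (Us n) i) / dt
           = (1/2) * (snd (Gfun m L w F (Us (Suc n))) i + snd (Gfun m L w F (Us n)) i)))"

end

theory Submission
  imports Defs
begin

text \<open>The right-hand side G is globally Lipschitz in the \<open>\<ell>\<^sup>1\<close> norm: it is linear up to
  the 1-Lipschitz term \<open>u\<^sub>1\<^sup>+\<close>. Hence G is bounded along the exact solution on \<open>[0,T]\<close>,
  the solution is Lipschitz, and so is \<open>t \<mapsto> G(U\<^sub>h(t))\<close>, with some constant \<open>\<Lambda>\<close>. By the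
  mean value theorem the trapezoidal rule then has local defect \<open>O(\<Lambda> \<Delta>t\<^sup>2)\<close>, and the error
  \<open>E\<^sub>n\<close> obeys the implicit recursion
  \<open>E\<^sub>n\<^sub>+\<^sub>1 \<le> E\<^sub>n + (C \<Delta>t/2)(E\<^sub>n\<^sub>+\<^sub>1 + E\<^sub>n) + O(\<Delta>t\<^sup>2)\<close>.
  For \<open>C \<Delta>t \<le> 1\<close> a discrete Gronwall argument over \<open>N = T/\<Delta>t\<close> steps gives \<open>E\<^sub>n = O(\<Delta>t)\<close>.
  Only first order is obtained because \<open>u\<^sub>1\<^sup>+\<close> makes G merely Lipschitz.\<close>

definition l1_norm :: "nat \<Rightarrow> state \<Rightarrow> real" where
  "l1_norm d x = (\<Sum>i=1..d. \<bar>fst x i\<bar> + \<bar>snd x i\<bar>)"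

lemma l1_norm_nonneg: "0 \<le> l1_norm d x"
  unfolding l1_norm_def by (intro sum_nonneg) auto

lemma snorm_le_l1_norm: "snorm m x \<le> l1_norm (m - 1) x"
proof -
  have "snorm m x \<le> L2_set (\<lambda>i. \<bar>fst x i\<bar> + \<bar>snd x i\<bar>) {1..m-1}"
    unfolding snorm_def L2_set_def
    by (intro real_sqrt_le_mono sum_mono) (simp add: power2_sum)
  also have "\<dots> \<le> l1_norm (m - 1) x"
    unfolding l1_norm_def by (rule L2_set_le_sum) auto
  finally show ?thesis .
qed

lemma abs_component_le_l1_norm:
  assumes "\<pi> \<in> {fst, snd}" "i \<in> {1..d}"
  shows "\<bar>\<pi> x i\<bar> \<le> l1_norm d x"
proof -
  have "\<bar>fst x i\<bar> + \<bar>snd x i\<bar> \<le> l1_norm d x"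
    unfolding l1_norm_def using assms(2) by (intro member_le_sum) auto
  then show ?thesis using assms(1) by auto
qed

lemma l1_norm_le_uniform:
  assumes "\<And>\<pi> i. \<pi> \<in> {fst, snd} \<Longrightarrow> i \<in> {1..d} \<Longrightarrow> \<bar>\<pi> x i\<bar> \<le> c"
  shows "l1_norm d x \<le> 2 * real d * c"
proof -
  have "l1_norm d x \<le> (\<Sum>i=1..d. c + c)"
    unfolding l1_norm_def using assms by (intro sum_mono add_mono) auto
  then show ?thesis by simp
qed

lemma sdiff_component: "\<pi> \<in> {fst, snd} \<Longrightarrow> \<pi> (sdiff x y) i = \<pi> x i - \<pi> y i"
  unfolding sdiff_def by auto

lemma l1_norm_sdiff_triangle: "l1_norm d x \<le> l1_norm d y + l1_norm d (sdiff x y)"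
proof -
  have "l1_norm d x \<le> (\<Sum>i=1..d. (\<bar>fst y i\<bar> + \<bar>snd y i\<bar>) + (\<bar>fst x i - fst y i\<bar> + \<bar>snd x i - snd y i\<bar>))"
    unfolding l1_norm_def by (intro sum_mono) auto
  then show ?thesis unfolding l1_norm_def sdiff_def by (simp add: sum.distrib)
qed

lemma l1_norm_combination_le:
  assumes "0 \<le> c"
    and "\<And>\<pi> i. \<pi> \<in> {fst, snd} \<Longrightarrow> i \<in> {1..d} \<Longrightarrow> \<pi> x i = \<pi> a i + \<pi> b i + c * (\<pi> p i + \<pi> q i)"
  shows "l1_norm d x \<le> l1_norm d a + l1_norm d b + c * (l1_norm d p + l1_norm d q)"
proof -
  have comp: "\<bar>\<pi> x i\<bar> \<le> \<bar>\<pi> a i\<bar> + \<bar>\<pi> b i\<bar> + c * \<bar>\<pi> p i\<bar> + c * \<bar>\<pi> q i\<bar>"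
    if "\<pi> \<in> {fst, snd}" "i \<in> {1..d}" for \<pi> i
  proof -
    have "\<bar>c * (\<pi> p i + \<pi> q i)\<bar> \<le> c * \<bar>\<pi> p i\<bar> + c * \<bar>\<pi> q i\<bar>"
      using assms(1) by (simp add: abs_mult flip: distrib_left) (rule mult_left_mono, auto)
    then show ?thesis using assms(2)[OF that] by linarith
  qed
  have "l1_norm d x \<le> (\<Sum>i=1..d. (\<bar>fst a i\<bar> + \<bar>snd a i\<bar>) + (\<bar>fst b i\<bar> + \<bar>snd b i\<bar>)
      + c * (\<bar>fst p i\<bar> + \<bar>snd p i\<bar>) + c * (\<bar>fst q i\<bar> + \<bar>snd q i\<bar>))"
    unfolding l1_norm_def distrib_left using comp[of fst] comp[of snd]
    by (intro sum_mono) force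
  also have "\<dots> = l1_norm d a + l1_norm d b + c * (l1_norm d p + l1_norm d q)"
    unfolding l1_norm_def by (simp add: sum.distrib sum_distrib_left distrib_left)
  finally show ?thesis .
qed

definition entry_abs_sum :: "nat \<Rightarrow> rmat \<Rightarrow> real" where
  "entry_abs_sum n A = (\<Sum>i=1..n. \<Sum>k=1..n. \<bar>A i k\<bar>)"

lemma entry_abs_sum_nonneg: "0 \<le> entry_abs_sum n A"
  unfolding entry_abs_sum_def by (intro sum_nonneg) auto

lemma sum_abs_matvec_le:
  "(\<Sum>i=1..n. \<bar>matvec n A v i\<bar>) \<le> entry_abs_sum n A * (\<Sum>k=1..n. \<bar>v k\<bar>)"
proof -
  have "\<bar>matvec n A v i\<bar> \<le> (\<Sum>k=1..n. \<bar>A i k\<bar> * (\<Sum>j=1..n. \<bar>v j\<bar>))" for i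
  proof -
    have "\<bar>matvec n A v i\<bar> \<le> (\<Sum>k=1..n. \<bar>A i k\<bar> * \<bar>v k\<bar>)"
      unfolding matvec_def abs_mult[symmetric] by (rule sum_abs)
    also have "\<dots> \<le> (\<Sum>k=1..n. \<bar>A i k\<bar> * (\<Sum>j=1..n. \<bar>v j\<bar>))"
      by (intro sum_mono mult_left_mono member_le_sum) auto
    finally show ?thesis .
  qed
  then have "(\<Sum>i=1..n. \<bar>matvec n A v i\<bar>) \<le> (\<Sum>i=1..n. \<Sum>k=1..n. \<bar>A i k\<bar> * (\<Sum>j=1..n. \<bar>v j\<bar>))"
    by (intro sum_mono)
  also have "\<dots> = entry_abs_sum n A * (\<Sum>k=1..n. \<bar>v k\<bar>)"
    unfolding entry_abs_sum_def by (simp add: sum_distrib_right)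
  finally show ?thesis .
qed

lemma matvec_diff: "matvec n A u i - matvec n A v i = matvec n A (\<lambda>k. u k - v k) i"
  unfolding matvec_def by (simp add: sum_subtractf right_diff_distrib)

lemma sum_abs_fst_Gfun_diff_le:
  assumes "L > 0"
  shows "(\<Sum>i=1..m-1. \<bar>fst (Gfun m L w F x) i - fst (Gfun m L w F y) i\<bar>)
    \<le> real m / L * entry_abs_sum (m - 1) (inv_on (m - 1) (Mstar L (L / real m) w))
        * (\<Sum>k=1..m-1. \<bar>snd x k - snd y k\<bar>)"
proof -
  define B where "B = inv_on (m - 1) (Mstar L (L / real m) w)"
  have "(\<Sum>i=1..m-1. \<bar>fst (Gfun m L w F x) i - fst (Gfun m L w F y) i\<bar>)
      = real m / L * (\<Sum>i=1..m-1. \<bar>matvec (m - 1) B (\<lambda>k. snd x k - snd y k) i\<bar>)"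
  proof -
    have "fst (Gfun m L w F x) i - fst (Gfun m L w F y) i
        = real m / L * matvec (m - 1) B (\<lambda>k. snd x k - snd y k) i" for i
      unfolding Gfun_def Let_def B_def matvec_diff[symmetric] by (simp add: algebra_simps)
    then show ?thesis using assms by (simp add: abs_mult sum_distrib_left)
  qed
  also have "\<dots> \<le> real m / L * (entry_abs_sum (m - 1) B * (\<Sum>k=1..m-1. \<bar>snd x k - snd y k\<bar>))"
    using assms by (intro mult_left_mono sum_abs_matvec_le) auto
  finally show ?thesis unfolding B_def by (simp add: mult.assoc)
qed

lemma sum_abs_snd_Gfun_diff_le:
  assumes "m > 1" "L > 0"
  shows "(\<Sum>i=1..m-1. \<bar>snd (Gfun m L w F x) i - snd (Gfun m L w F y) i\<bar>)
    \<le> real m / L * (entry_abs_sum (m - 1) (Sstar L (L / real m)) + 1)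
        * (\<Sum>k=1..m-1. \<bar>fst x k - fst y k\<bar>)"
proof -
  define S where "S = Sstar L (L / real m)"
  define dU where "dU k = fst x k - fst y k" for k
  define c where "c = real m / L"
  have "0 \<le> c" unfolding c_def using assms(2) by simp
  have one: "1 \<in> {1..m-1}" using assms(1) by simp
  have "\<bar>snd (Gfun m L w F x) i - snd (Gfun m L w F y) i\<bar>
      \<le> c * (\<bar>matvec (m - 1) S dU i\<bar> + (if i = 1 then \<bar>dU 1\<bar> else 0))" for i
  proof -
    have "snd (Gfun m L w F x) i - snd (Gfun m L w F y) i
        = c * (- matvec (m - 1) S dU i + (if i = 1 then max (fst x 1) 0 - max (fst y 1) 0 else 0))"
      unfolding Gfun_def Let_def S_def dU_def c_def matvec_diff[symmetric]
      by (simp add: algebra_simps diff_divide_distrib)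
    moreover have "\<bar>- matvec (m - 1) S dU i + (if i = 1 then max (fst x 1) 0 - max (fst y 1) 0 else 0)\<bar>
        \<le> \<bar>matvec (m - 1) S dU i\<bar> + (if i = 1 then \<bar>dU 1\<bar> else 0)"
      unfolding dU_def by auto
    ultimately show ?thesis using \<open>0 \<le> c\<close> by (simp add: abs_mult mult_left_mono)
  qed
  then have "(\<Sum>i=1..m-1. \<bar>snd (Gfun m L w F x) i - snd (Gfun m L w F y) i\<bar>)
      \<le> (\<Sum>i=1..m-1. c * (\<bar>matvec (m - 1) S dU i\<bar> + (if i = 1 then \<bar>dU 1\<bar> else 0)))"
    by (intro sum_mono)
  also have "\<dots> = c * ((\<Sum>i=1..m-1. \<bar>matvec (m - 1) S dU i\<bar>) + \<bar>dU 1\<bar>)"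
    unfolding distrib_left[symmetric] sum_distrib_left[symmetric] sum.distrib using one by simp
  also have "\<dots> \<le> c * (entry_abs_sum (m - 1) S * (\<Sum>k=1..m-1. \<bar>dU k\<bar>) + (\<Sum>k=1..m-1. \<bar>dU k\<bar>))"
    using \<open>0 \<le> c\<close> one by (intro mult_left_mono add_mono sum_abs_matvec_le member_le_sum) auto
  finally show ?thesis unfolding S_def dU_def c_def by (simp add: algebra_simps)
qed

definition Gfun_lipschitz_const :: "nat \<Rightarrow> real \<Rightarrow> (nat \<Rightarrow> real) \<Rightarrow> real" where
  "Gfun_lipschitz_const m L w = real m / L *
     (entry_abs_sum (m - 1) (inv_on (m - 1) (Mstar L (L / real m) w))
      + entry_abs_sum (m - 1) (Sstar L (L / real m)) + 1)"

lemma Gfun_lipschitz_const_pos: "m > 0 \<Longrightarrow> L > 0 \<Longrightarrow> Gfun_lipschitz_const m L w > 0"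
  unfolding Gfun_lipschitz_const_def by (intro mult_pos_pos add_nonneg_pos add_nonneg_nonneg entry_abs_sum_nonneg) auto

lemma Gfun_l1_lipschitz:
  assumes "m > 1" "L > 0"
  shows "l1_norm (m - 1) (sdiff (Gfun m L w F x) (Gfun m L w F y))
    \<le> Gfun_lipschitz_const m L w * l1_norm (m - 1) (sdiff x y)"
proof -
  define c where "c = real m / L"
  define a where "a = entry_abs_sum (m - 1) (inv_on (m - 1) (Mstar L (L / real m) w))"
  define b where "b = entry_abs_sum (m - 1) (Sstar L (L / real m))"
  define dU where "dU = (\<Sum>k=1..m-1. \<bar>fst x k - fst y k\<bar>)"
  define dV where "dV = (\<Sum>k=1..m-1. \<bar>snd x k - snd y k\<bar>)"
  have "0 \<le> c * (a * dU + b * dV + dV)"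
    unfolding a_def b_def c_def dU_def dV_def using assms(2)
    by (intro mult_nonneg_nonneg add_nonneg_nonneg sum_nonneg entry_abs_sum_nonneg) auto
  have "l1_norm (m - 1) (sdiff (Gfun m L w F x) (Gfun m L w F y)) \<le> c * a * dV + c * (b + 1) * dU"
    unfolding l1_norm_def sdiff_def fst_conv snd_conv sum.distrib a_def b_def c_def dU_def dV_def
    by (intro add_mono sum_abs_fst_Gfun_diff_le sum_abs_snd_Gfun_diff_le assms)
  also have "\<dots> \<le> c * ((a + b + 1) * (dU + dV))"
    using \<open>0 \<le> c * (a * dU + b * dV + dV)\<close> by (simp add: algebra_simps)
  also have "\<dots> = Gfun_lipschitz_const m L w * l1_norm (m - 1) (sdiff x y)"
    unfolding Gfun_lipschitz_const_def l1_norm_def sdiff_def a_def b_def c_def dU_def dV_def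
    by (simp add: sum.distrib)
  finally show ?thesis .
qed

lemma mean_value_theorem_within:
  fixes f g :: "real \<Rightarrow> real"
  assumes "a \<le> b" "{a..b} \<subseteq> S"
    and "\<And>t. t \<in> S \<Longrightarrow> (f has_real_derivative g t) (at t within S)"
  shows "\<exists>x\<in>{a..b}. f b - f a = g x * (b - a)"
proof -
  have "(f has_derivative (\<lambda>h. g x * h)) (at x within {a..b})" if "x \<in> {a..b}" for x
    using has_field_derivative_subset[OF assms(3) assms(2)] that assms(2)
    by (auto simp: has_field_derivative_def mult_commute_abs)
  from mvt_very_simple[OF assms(1) this] show ?thesis by simp
qed

lemma trapezoid_rule_error:
  fixes f g :: "real \<Rightarrow> real"
  assumes "a \<le> b" "{a..b} \<subseteq> S"
    and "\<And>t. t \<in> S \<Longrightarrow> (f has_real_derivative g t) (at t within S)"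
    and "\<And>s t. a \<le> s \<Longrightarrow> s \<le> t \<Longrightarrow> t \<le> b \<Longrightarrow> \<bar>g t - g s\<bar> \<le> \<Lambda> * (t - s)"
  shows "\<bar>f b - f a - (b - a) / 2 * (g b + g a)\<bar> \<le> \<Lambda> * (b - a)\<^sup>2 / 2"
proof -
  obtain x where x: "x \<in> {a..b}" "f b - f a = g x * (b - a)"
    using mean_value_theorem_within[OF assms(1-3)] by blast
  have "f b - f a - (b - a) / 2 * (g b + g a) = (b - a) / 2 * ((g x - g b) + (g x - g a))"
    using x by (simp add: algebra_simps)
  also have "\<bar>\<dots>\<bar> \<le> (b - a) / 2 * (\<Lambda> * (b - x) + \<Lambda> * (x - a))"
    using x assms(1) assms(4)[of x b] assms(4)[of a x]
    by (simp add: abs_mult) (intro mult_left_mono; auto)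
  also have "\<dots> = \<Lambda> * (b - a)\<^sup>2 / 2" by (simp add: power2_eq_square algebra_simps)
  finally show ?thesis .
qed

text \<open>One step of an implicit recursion, made explicit: since \<open>a \<le> 1/2\<close>,
  \<open>(1 + a) / (1 - a) \<le> 1 + 4 a\<close> and \<open>1 / (1 - a) \<le> 2\<close>.\<close>
lemma implicit_step_le:
  fixes x y a q :: real
  assumes "0 \<le> x" "0 \<le> a" "a \<le> 1/2" "0 \<le> q" "y \<le> x + a * (y + x) + q"
  shows "y \<le> (1 + 4 * a) * x + 2 * q"
proof -
  have "(1 - a) * ((1 + 4 * a) * x + 2 * q) - ((1 + a) * x + q) = (1 - 2 * a) * (2 * a * x + q)"
    by (simp add: algebra_simps)
  moreover have "0 \<le> (1 - 2 * a) * (2 * a * x + q)"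
    using assms(1-4) by (intro mult_nonneg_nonneg) auto
  ultimately have "(1 - a) * y \<le> (1 - a) * ((1 + 4 * a) * x + 2 * q)"
    using assms(5) by (simp add: algebra_simps)
  then show ?thesis using assms(3) by simp
qed

lemma discrete_gronwall:
  fixes E :: "nat \<Rightarrow> real"
  assumes "E 0 = 0" "\<And>n. 0 \<le> E n" "0 \<le> a" "a \<le> 1/2" "0 \<le> q"
    and "\<And>n. n < N \<Longrightarrow> E (Suc n) \<le> E n + a * (E (Suc n) + E n) + q"
  shows "n \<le> N \<Longrightarrow> E n \<le> 2 * q * real n * exp (4 * a * real n)"
proof (induction n)
  case 0
  then show ?case using assms(1) by simp
next
  case (Suc n)
  have "E (Suc n) \<le> (1 + 4 * a) * E n + 2 * q"
    using Suc.prems assms by (intro implicit_step_le) auto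
  also have "\<dots> \<le> exp (4 * a) * (2 * q * real n * exp (4 * a * real n)) + 2 * q * exp (4 * a * real (Suc n))"
  proof (rule add_mono)
    show "(1 + 4 * a) * E n \<le> exp (4 * a) * (2 * q * real n * exp (4 * a * real n))"
      using Suc assms(2,3) exp_ge_add_one_self[of "4 * a"] by (intro mult_mono) auto
    show "2 * q \<le> 2 * q * exp (4 * a * real (Suc n))"
      using assms(3,5) by (simp add: mult_le_cancel_left1)
  qed
  also have "\<dots> = 2 * q * real (Suc n) * exp (4 * a * real (Suc n))"
    by (simp add: algebra_simps flip: exp_add)
  finally show ?case .
qed

text \<open>Quantifying over the projections \<open>\<pi> \<in> {fst, snd}\<close> treats the U- and V-components
  of a state uniformly.\<close>

definition cn_sequence :: "nat \<Rightarrow> (state \<Rightarrow> state) \<Rightarrow> real \<Rightarrow> nat \<Rightarrow> state \<Rightarrow> (nat \<Rightarrow> state) \<Rightarrow> bool"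
  where "cn_sequence d G dt N X0 Us \<longleftrightarrow>
    (\<forall>\<pi>\<in>{fst, snd}. \<forall>i\<in>{1..d}. \<pi> (Us 0) i = \<pi> X0 i) \<and>
    (\<forall>k<N. \<forall>\<pi>\<in>{fst, snd}. \<forall>i\<in>{1..d}.
       \<pi> (Us (Suc k)) i - \<pi> (Us k) i = dt / 2 * (\<pi> (G (Us (Suc k))) i + \<pi> (G (Us k)) i))"

locale l1_lipschitz_ode =
  fixes d :: nat and T C :: real and G :: "state \<Rightarrow> state" and Uh :: "real \<Rightarrow> state"
  assumes T_pos: "0 < T" and C_pos: "0 < C"
    and G_lipschitz: "l1_norm d (sdiff (G x) (G y)) \<le> C * l1_norm d (sdiff x y)"
    and solution_deriv: "\<pi> \<in> {fst, snd} \<Longrightarrow> t \<in> {0..T} \<Longrightarrow> i \<in> {1..d} \<Longrightarrow>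
      ((\<lambda>s. \<pi> (Uh s) i) has_real_derivative \<pi> (G (Uh t)) i) (at t within {0..T})"
begin

lemma rhs_bounded_on_solution: "\<exists>B\<ge>0. \<forall>t\<in>{0..T}. l1_norm d (G (Uh t)) \<le> B"
proof -
  have "continuous_on {0..T} (\<lambda>s. \<pi> (Uh s) i)" if "\<pi> \<in> {fst, snd}" "i \<in> {1..d}" for \<pi> i
    unfolding continuous_on_eq_continuous_within
    using solution_deriv[OF that(1) _ that(2)] DERIV_continuous by blast
  then have "continuous_on {0..T} (\<lambda>t. l1_norm d (Uh t))"
    unfolding l1_norm_def by (intro continuous_on_sum continuous_on_add continuous_on_rabs) auto
  moreover have "{0..T} \<noteq> {}" using T_pos by simp
  ultimately obtain t0 where t0: "\<And>t. t \<in> {0..T} \<Longrightarrow> l1_norm d (Uh t) \<le> l1_norm d (Uh t0)"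
    using continuous_attains_sup[OF compact_Icc] by blast
  define zero :: state where "zero = (\<lambda>_. 0, \<lambda>_. 0)"
  show ?thesis
  proof (intro exI conjI ballI)
    show "0 \<le> l1_norm d (G zero) + C * l1_norm d (Uh t0)"
      using C_pos by (simp add: l1_norm_nonneg)
    fix t :: real assume t: "t \<in> {0..T}"
    have "l1_norm d (G (Uh t)) \<le> l1_norm d (G zero) + C * l1_norm d (sdiff (Uh t) zero)"
      using order_trans[OF l1_norm_sdiff_triangle add_left_mono[OF G_lipschitz]] .
    also have "\<dots> \<le> l1_norm d (G zero) + C * l1_norm d (Uh t0)"
      using t0[OF t] C_pos by (simp add: l1_norm_def sdiff_def zero_def)
    finally show "l1_norm d (G (Uh t)) \<le> l1_norm d (G zero) + C * l1_norm d (Uh t0)" .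
  qed
qed

lemma solution_lipschitz:
  assumes "\<And>t. t \<in> {0..T} \<Longrightarrow> l1_norm d (G (Uh t)) \<le> B" and "0 \<le> a" "a \<le> b" "b \<le> T"
  shows "l1_norm d (sdiff (Uh b) (Uh a)) \<le> 2 * real d * (B * (b - a))"
proof (rule l1_norm_le_uniform)
  fix \<pi> :: "state \<Rightarrow> rvec" and i assume \<pi>: "\<pi> \<in> {fst, snd}" and i: "i \<in> {1..d}"
  have sub: "{a..b} \<subseteq> {0..T}" using assms(2,4) by auto
  obtain x where x: "x \<in> {a..b}" "\<pi> (Uh b) i - \<pi> (Uh a) i = \<pi> (G (Uh x)) i * (b - a)"
    using mean_value_theorem_within[OF assms(3) sub solution_deriv[OF \<pi> _ i]] by blast
  have "x \<in> {0..T}" using x(1) sub by blast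
  then have "\<bar>\<pi> (G (Uh x)) i\<bar> \<le> B"
    using order_trans[OF abs_component_le_l1_norm[OF \<pi> i] assms(1)] by blast
  then show "\<bar>\<pi> (sdiff (Uh b) (Uh a)) i\<bar> \<le> B * (b - a)"
    using x(2) assms(3) by (simp add: sdiff_component[OF \<pi>] abs_mult mult_right_mono)
qed

lemma rhs_lipschitz_on_solution:
  obtains \<Lambda> where "0 \<le> \<Lambda>"
    "\<And>a b. 0 \<le> a \<Longrightarrow> a \<le> b \<Longrightarrow> b \<le> T \<Longrightarrow> l1_norm d (sdiff (G (Uh b)) (G (Uh a))) \<le> \<Lambda> * (b - a)"
proof -
  obtain B where B: "0 \<le> B" "\<And>t. t \<in> {0..T} \<Longrightarrow> l1_norm d (G (Uh t)) \<le> B"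
    using rhs_bounded_on_solution by auto
  show thesis
  proof
    show "0 \<le> C * (2 * real d * B)" using B(1) C_pos by simp
    fix a b assume ab: "0 \<le> a" "a \<le> b" "b \<le> T"
    have "l1_norm d (sdiff (G (Uh b)) (G (Uh a))) \<le> C * l1_norm d (sdiff (Uh b) (Uh a))"
      by (rule G_lipschitz)
    also have "\<dots> \<le> C * (2 * real d * (B * (b - a)))"
      using solution_lipschitz[OF B(2) ab] C_pos by (intro mult_left_mono) auto
    finally show "l1_norm d (sdiff (G (Uh b)) (G (Uh a))) \<le> C * (2 * real d * B) * (b - a)"
      by (simp add: mult.assoc)
  qed
qed

lemma cn_error_step:
  assumes \<Lambda>: "\<And>a b. 0 \<le> a \<Longrightarrow> a \<le> b \<Longrightarrow> b \<le> T \<Longrightarrow>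
      l1_norm d (sdiff (G (Uh b)) (G (Uh a))) \<le> \<Lambda> * (b - a)"
    and ab: "0 \<le> a" "a \<le> b" "b \<le> T"
    and step: "\<And>\<pi> i. \<pi> \<in> {fst, snd} \<Longrightarrow> i \<in> {1..d} \<Longrightarrow>
      \<pi> Y i - \<pi> X i = (b - a) / 2 * (\<pi> (G Y) i + \<pi> (G X) i)"
  shows "l1_norm d (sdiff (Uh b) Y) \<le> l1_norm d (sdiff (Uh a) X)
      + (b - a) * C / 2 * (l1_norm d (sdiff (Uh b) Y) + l1_norm d (sdiff (Uh a) X))
      + real d * \<Lambda> * (b - a)\<^sup>2"
proof -
  define \<tau> :: state where "\<tau> =
    (\<lambda>i. fst (Uh b) i - fst (Uh a) i - (b - a) / 2 * (fst (G (Uh b)) i + fst (G (Uh a)) i),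
     \<lambda>i. snd (Uh b) i - snd (Uh a) i - (b - a) / 2 * (snd (G (Uh b)) i + snd (G (Uh a)) i))"
  have \<tau>_component: "\<pi> \<tau> i = \<pi> (Uh b) i - \<pi> (Uh a) i - (b - a) / 2 * (\<pi> (G (Uh b)) i + \<pi> (G (Uh a)) i)"
    if "\<pi> \<in> {fst, snd}" for \<pi> i
    using that by (auto simp: \<tau>_def)
  have "l1_norm d \<tau> \<le> 2 * real d * (\<Lambda> * (b - a)\<^sup>2 / 2)"
  proof (rule l1_norm_le_uniform)
    fix \<pi> :: "state \<Rightarrow> rvec" and i assume \<pi>: "\<pi> \<in> {fst, snd}" and i: "i \<in> {1..d}"
    have sub: "{a..b} \<subseteq> {0..T}" using ab by auto
    show "\<bar>\<pi> \<tau> i\<bar> \<le> \<Lambda> * (b - a)\<^sup>2 / 2"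
      unfolding \<tau>_component[OF \<pi>]
    proof (rule trapezoid_rule_error[OF ab(2) sub solution_deriv[OF \<pi> _ i]])
      fix s t assume "a \<le> s" "s \<le> t" "t \<le> b"
      then have "l1_norm d (sdiff (G (Uh t)) (G (Uh s))) \<le> \<Lambda> * (t - s)" using ab by (intro \<Lambda>) auto
      with abs_component_le_l1_norm[OF \<pi> i]
      show "\<bar>\<pi> (G (Uh t)) i - \<pi> (G (Uh s)) i\<bar> \<le> \<Lambda> * (t - s)"
        by (metis order_trans sdiff_component[OF \<pi>])
    qed
  qed
  then have defect: "l1_norm d \<tau> \<le> real d * \<Lambda> * (b - a)\<^sup>2" by simp
  have "l1_norm d (sdiff (Uh b) Y) \<le> l1_norm d (sdiff (Uh a) X) + l1_norm d \<tau>
      + (b - a) / 2 * (l1_norm d (sdiff (G (Uh b)) (G Y)) + l1_norm d (sdiff (G (Uh a)) (G X)))"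
  proof (rule l1_norm_combination_le)
    fix \<pi> :: "state \<Rightarrow> rvec" and i assume \<pi>: "\<pi> \<in> {fst, snd}" and i: "i \<in> {1..d}"
    show "\<pi> (sdiff (Uh b) Y) i = \<pi> (sdiff (Uh a) X) i + \<pi> \<tau> i
        + (b - a) / 2 * (\<pi> (sdiff (G (Uh b)) (G Y)) i + \<pi> (sdiff (G (Uh a)) (G X)) i)"
      using step[OF \<pi> i] unfolding sdiff_component[OF \<pi>] \<tau>_component[OF \<pi>]
      by (simp add: algebra_simps)
  qed (use ab in simp)
  also have "\<dots> \<le> l1_norm d (sdiff (Uh a) X) + real d * \<Lambda> * (b - a)\<^sup>2
      + (b - a) / 2 * (C * l1_norm d (sdiff (Uh b) Y) + C * l1_norm d (sdiff (Uh a) X))"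
    using defect ab by (intro add_mono mult_left_mono G_lipschitz) auto
  finally show ?thesis by (simp add: algebra_simps)
qed

lemma cn_error_le:
  assumes \<Lambda>: "0 \<le> \<Lambda>" "\<And>a b. 0 \<le> a \<Longrightarrow> a \<le> b \<Longrightarrow> b \<le> T \<Longrightarrow>
      l1_norm d (sdiff (G (Uh b)) (G (Uh a))) \<le> \<Lambda> * (b - a)"
    and N: "0 < N" "T / real N * C \<le> 1"
    and cn: "cn_sequence d G (T / real N) N (Uh 0) Us"
    and "n \<le> N"
  shows "l1_norm d (sdiff (Uh (real n * (T / real N))) (Us n))
    \<le> 2 * real d * \<Lambda> * T * exp (2 * C * T) * (T / real N)"
proof -
  define dt where "dt = T / real N"
  define E where "E k = l1_norm d (sdiff (Uh (real k * dt)) (Us k))" for k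
  have dt_pos: "0 < dt" unfolding dt_def using N(1) T_pos by simp
  have grid: "0 \<le> real k * dt" "real k * dt \<le> T" if "k \<le> N" for k
    using that dt_pos N(1) T_pos by (auto simp: dt_def field_simps)
  have "E n \<le> 2 * (real d * \<Lambda> * dt\<^sup>2) * real n * exp (4 * (dt * C / 2) * real n)"
  proof (rule discrete_gronwall[where N = N])
    show "E 0 = 0"
      using cn unfolding E_def l1_norm_def cn_sequence_def by (auto simp: sdiff_def intro!: sum.neutral)
    show "dt * C / 2 \<le> 1 / 2" using N(2) by (simp add: dt_def)
    fix k assume k: "k < N"
    have "real (Suc k) * dt - real k * dt = dt" by (simp add: algebra_simps)
    then show "E (Suc k) \<le> E k + dt * C / 2 * (E (Suc k) + E k) + real d * \<Lambda> * dt\<^sup>2"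
      using cn_error_step[OF \<Lambda>(2) grid(1)[of k] _ grid(2)[of "Suc k"], of "Us (Suc k)" "Us k"]
        cn k dt_pos unfolding E_def dt_def cn_sequence_def by (simp add: mult.commute)
  qed (use \<open>n \<le> N\<close> \<Lambda>(1) dt_pos C_pos in \<open>auto simp: E_def l1_norm_nonneg\<close>)
  also have "\<dots> = (real n * dt) * (2 * real d * \<Lambda> * dt) * exp (2 * C * (real n * dt))"
    by (simp add: power2_eq_square algebra_simps)
  also have "\<dots> \<le> T * (2 * real d * \<Lambda> * dt) * exp (2 * C * T)"
    using grid[OF \<open>n \<le> N\<close>] \<Lambda>(1) dt_pos C_pos T_pos
    by (intro mult_mono mult_right_mono) auto
  finally show ?thesis unfolding E_def dt_def by (simp add: algebra_simps)
qed

theorem cn_error_bound: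
  "\<exists>K>0. \<forall>N Us. 0 < N \<longrightarrow> T / real N < 1 / C \<longrightarrow> cn_sequence d G (T / real N) N (Uh 0) Us
    \<longrightarrow> (\<forall>n\<le>N. l1_norm d (sdiff (Uh (real n * (T / real N))) (Us n)) \<le> K * (T / real N))"
proof -
  obtain \<Lambda> where \<Lambda>: "0 \<le> \<Lambda>" "\<And>a b. 0 \<le> a \<Longrightarrow> a \<le> b \<Longrightarrow> b \<le> T \<Longrightarrow>
      l1_norm d (sdiff (G (Uh b)) (G (Uh a))) \<le> \<Lambda> * (b - a)"
    using rhs_lipschitz_on_solution by blast
  define K where "K = 2 * real d * \<Lambda> * T * exp (2 * C * T) + 1"
  have "0 < K" unfolding K_def using \<Lambda>(1) T_pos by (simp add: add_nonneg_pos)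
  moreover have "l1_norm d (sdiff (Uh (real n * (T / real N))) (Us n)) \<le> K * (T / real N)"
    if "0 < N" "T / real N < 1 / C" "cn_sequence d G (T / real N) N (Uh 0) Us"
      "n \<le> N" for N Us n
  proof -
    have "T / real N * C \<le> 1" using that(2) C_pos by (simp add: field_simps)
    with that have "l1_norm d (sdiff (Uh (real n * (T / real N))) (Us n))
        \<le> 2 * real d * \<Lambda> * T * exp (2 * C * T) * (T / real N)"
      by (intro cn_error_le[OF \<Lambda>]) auto
    also have "\<dots> \<le> K * (T / real N)" unfolding K_def using T_pos that(1) by (simp add: field_simps)
    finally show ?thesis .
  qed
  ultimately show ?thesis by blast
qed

end

lemma is_CN_seq_imp_cn_sequence:
  assumes "is_CN_seq m L T w F Uh N Us" "0 < N" "0 < T"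
  shows "cn_sequence (m - 1) (Gfun m L w F) (T / real N) N (Uh 0) Us"
proof -
  have solve: "y - x = dt / 2 * s" if "(y - x) / dt = 1 / 2 * s" "dt \<noteq> 0" for x y s dt :: real
    using that by (simp add: field_simps)
  have dt: "T / real N \<noteq> 0" using assms(2,3) by simp
  have "\<pi> (Us (Suc k)) i - \<pi> (Us k) i
      = T / real N / 2 * (\<pi> (Gfun m L w F (Us (Suc k))) i + \<pi> (Gfun m L w F (Us k)) i)"
    if "k < N" "\<pi> \<in> {fst, snd}" "i \<in> {1..m-1}" for k i and \<pi> :: "state \<Rightarrow> rvec"
  proof -
    from assms(1) that(1,3) have
      "fst (Us (Suc k)) i - fst (Us k) i
         = T / real N / 2 * (fst (Gfun m L w F (Us (Suc k))) i + fst (Gfun m L w F (Us k)) i)"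
      "snd (Us (Suc k)) i - snd (Us k) i
         = T / real N / 2 * (snd (Gfun m L w F (Us (Suc k))) i + snd (Gfun m L w F (Us k)) i)"
      unfolding is_CN_seq_def Let_def using solve[OF _ dt] by blast+
    with that(2) show ?thesis by auto
  qed
  with assms(1) show ?thesis unfolding is_CN_seq_def cn_sequence_def Let_def by auto
qed

theorem lemma3p1:
  fixes m :: nat and L T :: real and w :: "nat \<Rightarrow> real"
    and F U0 V0 :: rvec and Uh :: "real \<Rightarrow> state"
  assumes "m > 1" and "L > 0" and "T > 0"
    and "w 0 = 0"
    and "invertible_on (m - 1) (Mstar L (L / real m) w)"
    and "is_solution m L T w F U0 V0 Uh"
  shows "\<exists>\<delta>>0. \<exists>K>0. \<forall>N::nat. \<forall>Us :: nat \<Rightarrow> state.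
           N > 0 \<longrightarrow> T / real N < \<delta> \<longrightarrow> is_CN_seq m L T w F Uh N Us \<longrightarrow>
           (\<forall>n\<le>N. snorm m (sdiff (Uh (real n * (T / real N))) (Us n)) \<le> K * (T / real N))"
proof -
  define C where "C = Gfun_lipschitz_const m L w"
  interpret l1_lipschitz_ode "m - 1" T C "Gfun m L w F" Uh
  proof
    show "0 < T" by (fact assms(3))
    show "0 < C" unfolding C_def using assms(1,2) by (simp add: Gfun_lipschitz_const_pos)
    show "l1_norm (m - 1) (sdiff (Gfun m L w F x) (Gfun m L w F y)) \<le> C * l1_norm (m - 1) (sdiff x y)"
      for x y unfolding C_def by (rule Gfun_l1_lipschitz[OF assms(1,2)])
    show "((\<lambda>s. \<pi> (Uh s) i) has_real_derivative \<pi> (Gfun m L w F (Uh t)) i) (at t within {0..T})"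
      if "\<pi> \<in> {fst, snd}" "t \<in> {0..T}" "i \<in> {1..m - 1}" for \<pi> t i
      using assms(6) that unfolding is_solution_def by auto
  qed
  obtain K where "0 < K" and K: "\<forall>N Us. 0 < N \<longrightarrow> T / real N < 1 / C
      \<longrightarrow> cn_sequence (m - 1) (Gfun m L w F) (T / real N) N (Uh 0) Us
      \<longrightarrow> (\<forall>n\<le>N. l1_norm (m - 1) (sdiff (Uh (real n * (T / real N))) (Us n)) \<le> K * (T / real N))"
    using cn_error_bound by blast
  have "0 < 1 / C" using C_pos by simp
  moreover have "snorm m (sdiff (Uh (real n * (T / real N))) (Us n)) \<le> K * (T / real N)"
    if "0 < N" "T / real N < 1 / C" "is_CN_seq m L T w F Uh N Us" "n \<le> N" for N Us n
  proof -
    have "l1_norm (m - 1) (sdiff (Uh (real n * (T / real N))) (Us n)) \<le> K * (T / real N)"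
      using K is_CN_seq_imp_cn_sequence[OF that(3,1) assms(3)] that(1,2,4) by blast
    with snorm_le_l1_norm show ?thesis by (rule order_trans)
  qed
  ultimately show ?thesis using \<open>0 < K\<close> by blast
qed

end
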